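(* For every $p\in\mathbb{N}$ and $A,B\in\mathbb{R}^{n\times n}$: (i) $\|AB\|_{b,p}\le\|A\|_{S_\infty}\|B\|_{b,p}$; (ii) $\|A\|_{S_\infty}\le\|A\|_{b,p}$, and $\|A\|_{b,\infty}=\|A\|_{S_\infty}$; (iii) $\|A\|_{b,p}\le m^{1/p}\|A\|_{S_\infty}$; (iv) if $C\in\mathbb{R}^{n\times n}$ is block upper triangular with $C(0{:}j,j)=B_jA(0{:}j,j)$ for some $B_j\in\mathbb{R}^{n_{j+1}\times n_{j+1}}$, $j=0,\dots,m-1$, then $\|C\|_{b,2}\le\big(\max_{j=0,\dots,m-1}\|B_j\|_{S_\infty}\big)\|A\|_{b,2}$.
   Context: Fix a block structure $0=n_0<n_1<\dots<n_m=n$. Block $(i,j)$, $0\le i,j\le m-1$, of a matrix in $\mathbb{R}^{n\times n}$ consists of rows $n_i+1..n_{i+1}$ and columns $n_j+1..n_{j+1}$; $A(0{:}j,j)$ denotes the block column $j$ restricted to block rows $0..j$ (an $n_{j+1}\times(n_{j+1}-n_j)$ matrix). $\mathcal{D}_b\subset\mathbb{R}^{n\times m}$ is the set of $X$ with $X_{ij}=0$ whenever $i\notin[n_{j-1}+1,n_j]$. For $p\in\mathbb{N}\cup\{\infty\}$, $\|A\|_{b,p}:=\sup\{\|AX\|_{S_p}:X\in\mathcal{D}_b,\ \|X\|_{S_\infty}\le1\}$, where $\|\cdot\|_{S_p}$ is the Schatten $p$-norm (sum of $p$-th powers of singular values to the power $1/p$; $S_\infty$ is the spectral norm). *)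

theory Defs
  imports "Jordan_Normal_Form.Char_Poly" "HOL-Computational_Algebra.Polynomial"
begin

(* A^T A is symmetric PSD, so its char. polynomial
   splits over the reals. *)
definition singular_values :: "real mat \<Rightarrow> real multiset" where
  "singular_values A = image_mset sqrt (proots (char_poly (transpose_mat A * A)))"

definition schatten_norm :: "nat \<Rightarrow> real mat \<Rightarrow> real" where
  "schatten_norm p A = (\<Sum>\<^sub># (image_mset (\<lambda>s. s ^ p) (singular_values A))) powr (1 / real p)"

(* Schatten infinity norm = spectral norm = largest singular value (0 if none) *)
definition spectral_norm :: "real mat \<Rightarrow> real" where
  "spectral_norm A = Max (insert 0 (set_mset (singular_values A)))"

definition block_structure :: "nat \<Rightarrow> nat \<Rightarrow> (nat \<Rightarrow> nat) \<Rightarrow> bool" where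
  "block_structure n m nb \<longleftrightarrow> nb 0 = 0 \<and> (\<forall>j<m. nb j < nb (Suc j)) \<and> nb m = n"

(* D_b: n x m matrices whose column j (0-based) is supported on the rows of block j,
   i.e. rows nb j .. nb (j+1) - 1 (0-based) *)
definition Db :: "nat \<Rightarrow> nat \<Rightarrow> (nat \<Rightarrow> nat) \<Rightarrow> real mat set" where
  "Db n m nb = {X \<in> carrier_mat n m.
      \<forall>i<n. \<forall>j<m. \<not> (nb j \<le> i \<and> i < nb (Suc j)) \<longrightarrow> X $$ (i, j) = 0}"

definition block_norm :: "nat \<Rightarrow> nat \<Rightarrow> (nat \<Rightarrow> nat) \<Rightarrow> nat \<Rightarrow> real mat \<Rightarrow> real" where
  "block_norm n m nb p A =
     Sup {schatten_norm p (A * X) | X. X \<in> Db n m nb \<and> spectral_norm X \<le> 1}"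

definition block_norm_inf :: "nat \<Rightarrow> nat \<Rightarrow> (nat \<Rightarrow> nat) \<Rightarrow> real mat \<Rightarrow> real" where
  "block_norm_inf n m nb A =
     Sup {spectral_norm (A * X) | X. X \<in> Db n m nb \<and> spectral_norm X \<le> 1}"

(* A(0:j, j): block column j restricted to block rows 0..j, an
   nb(j+1) x (nb(j+1) - nb j) matrix *)
definition block_col_upper :: "(nat \<Rightarrow> nat) \<Rightarrow> nat \<Rightarrow> real mat \<Rightarrow> real mat" where
  "block_col_upper nb j A =
     mat (nb (Suc j)) (nb (Suc j) - nb j) (\<lambda>(i, c). A $$ (i, nb j + c))"

definition block_upper_triangular :: "nat \<Rightarrow> nat \<Rightarrow> (nat \<Rightarrow> nat) \<Rightarrow> real mat \<Rightarrow> bool" where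
  "block_upper_triangular n m nb C \<longleftrightarrow>
     (\<forall>r<m. \<forall>s<m. s < r \<longrightarrow>
        (\<forall>i c. nb r \<le> i \<and> i < nb (Suc r) \<and> nb s \<le> c \<and> c < nb (Suc s) \<longrightarrow> C $$ (i, c) = 0))"

end

theory Submission
  imports Defs
begin

text \<open>
  Everything rests on the singular value decomposition, obtained from the spectral theorem for
  real symmetric matrices (by induction, splitting off an eigenvector with a Householder
  reflection). By the Courant-Fischer min-max principle,
  \<open>\<parallel>M x\<parallel> \<le> a \<parallel>N x\<parallel>\<close> for all \<open>x\<close> forces \<open>\<sigma>\<^sub>k(M) \<le> a \<sigma>\<^sub>k(N)\<close> for every \<open>k\<close>, hence
  \<open>\<parallel>M\<parallel>\<^sub>S\<^sub>p \<le> a \<parallel>N\<parallel>\<^sub>S\<^sub>p\<close>; with \<open>M = A B X\<close>, \<open>N = B X\<close> this gives (i).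
  For (ii), a top right singular vector \<open>v\<close> of \<open>A\<close> factors as \<open>v = X c\<close> with \<open>X \<in> D\<^sub>b\<close> of
  spectral norm at most one and \<open>\<parallel>c\<parallel> = \<parallel>v\<parallel>\<close>: column \<open>j\<close> of \<open>X\<close> is the normalized \<open>j\<close>-th block
  of \<open>v\<close>. Part (iii) is \<open>\<parallel>M\<parallel>\<^sub>S\<^sub>p \<le> r\<^bsup>1/p\<^esup> \<parallel>M\<parallel>\<^sub>S\<^sub>\<infinity>\<close> for \<open>M = A X\<close> with \<open>r = m\<close> columns.
  For (iv), the Schatten 2-norm is the Frobenius norm, a sum over columns, and for \<open>X \<in> D\<^sub>b\<close>
  column \<open>j\<close> of \<open>C X\<close> is \<open>B\<^sub>j\<close> applied to block rows \<open>0..j\<close> of column \<open>j\<close> of \<open>A X\<close>.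
\<close>

section \<open>Spectral theorem for real symmetric matrices\<close>

lemma index_mat_diag [simp]:
  "i < n \<Longrightarrow> j < n \<Longrightarrow> mat_diag n f $$ (i, j) = (if i = j then f i else 0)"
  "dim_row (mat_diag n f) = n" "dim_col (mat_diag n f) = n"
  unfolding mat_diag_def by auto

lemma mat_diag_mult_vec:
  assumes "v \<in> carrier_vec n"
  shows "mat_diag n d *\<^sub>v v = vec n (\<lambda>i. d i * (v $ i :: real))"
  using assms by (intro eq_vecI) (auto simp: mat_diag_def scalar_prod_def, subst sum.remove, auto)

lemma sq_norm_vec_eq_sum:
  "(v :: real vec) \<in> carrier_vec n \<Longrightarrow> v \<bullet> v = (\<Sum>i<n. (v $ i)\<^sup>2)"
  by (simp add: scalar_prod_def lessThan_atLeast0 power2_eq_square)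

lemma real_sq_norm_vec_nonneg: "0 \<le> (v :: real vec) \<bullet> v"
  using conjugate_square_ge_0_vec[of v] by simp

lemma real_sq_norm_vec_pos: "(v :: real vec) \<in> carrier_vec n \<Longrightarrow> v \<noteq> 0\<^sub>v n \<Longrightarrow> 0 < v \<bullet> v"
  using conjugate_square_greater_0_vec[of v n] by simp

lemma real_symmetric_has_eigenvalue:
  fixes S :: "real mat"
  assumes S: "S \<in> carrier_mat n n" and sym: "transpose_mat S = S" and n: "0 < n"
  shows "\<exists>d. eigenvalue S d"
proof -
  define Sc where "Sc = map_mat (of_real :: real \<Rightarrow> complex) S"
  have Sc: "Sc \<in> carrier_mat n n" using S unfolding Sc_def by auto
  from char_poly_factorized[OF Sc] obtain as where
    cp: "char_poly Sc = (\<Prod>a\<leftarrow>as. [:- a, 1:])" and len: "length as = n" by auto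
  define z where "z = as ! 0"
  have "z \<in> set as" using len n unfolding z_def by auto
  hence root: "poly (char_poly Sc) z = 0" unfolding cp by (rule linear_poly_root)
  hence "eigenvalue Sc z" using eigenvalue_root_char_poly[OF Sc] by simp
  then obtain w where "eigenvector Sc w z" unfolding eigenvalue_def by auto
  hence w: "w \<in> carrier_vec n" and w0: "w \<noteq> 0\<^sub>v n" and Sw: "Sc *\<^sub>v w = z \<cdot>\<^sub>v w"
    unfolding eigenvector_def using Sc by auto
  have Sij: "\<And>i j. i < n \<Longrightarrow> j < n \<Longrightarrow> S $$ (j, i) = S $$ (i, j)"
    using sym S by (metis carrier_matD index_transpose_mat(1))
  have Sw_index: "(\<Sum>j<n. of_real (S $$ (i,j)) * w $ j) = z * w $ i" if i: "i < n" for i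
  proof -
    have "(Sc *\<^sub>v w) $ i = (\<Sum>j<n. of_real (S $$ (i,j)) * w $ j)"
      using i Sc S w unfolding Sc_def by (auto simp: scalar_prod_def row_def lessThan_atLeast0)
    thus ?thesis using Sw i w by simp
  qed
  text \<open>The Hermitian form \<open>w\<^sup>* S w\<close> is real and equals \<open>z \<parallel>w\<parallel>\<^sup>2\<close>, so \<open>z\<close> is real.\<close>
  define q where "q = (\<Sum>i<n. \<Sum>j<n. of_real (S $$ (i,j)) * cnj (w $ i) * w $ j)"
  define N where "N = (\<Sum>i<n. (cmod (w $ i))\<^sup>2)"
  have "q = (\<Sum>i<n. cnj (w $ i) * (\<Sum>j<n. of_real (S $$ (i,j)) * w $ j))"
    unfolding q_def by (simp add: sum_distrib_left mult_ac)
  also have "\<dots> = (\<Sum>i<n. cnj (w $ i) * (z * w $ i))" using Sw_index by simp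
  also have "\<dots> = z * of_real N"
    unfolding N_def of_real_sum complex_norm_square by (simp add: sum_distrib_left mult_ac)
  finally have qN: "q = z * of_real N" .
  have "cnj q = (\<Sum>i<n. \<Sum>j<n. of_real (S $$ (i,j)) * w $ i * cnj (w $ j))"
    unfolding q_def by (simp add: mult_ac)
  also have "\<dots> = (\<Sum>j<n. \<Sum>i<n. of_real (S $$ (i,j)) * w $ i * cnj (w $ j))"
    by (rule sum.swap)
  also have "\<dots> = q" unfolding q_def by (intro sum.cong refl) (auto simp: Sij mult_ac)
  finally have "cnj q = q" .
  from arg_cong[OF this, of Im] have "Im q = 0" by simp
  have "\<exists>i<n. w $ i \<noteq> 0" using w0 w by (metis eq_vecI carrier_vecD index_zero_vec(1,2))
  then obtain i0 where i0: "i0 < n" "w $ i0 \<noteq> 0" by auto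
  have "(cmod (w $ i0))\<^sup>2 \<le> N" unfolding N_def using i0 by (intro member_le_sum) auto
  moreover have "(cmod (w $ i0))\<^sup>2 > 0" using i0 by simp
  ultimately have "N > 0" by linarith
  with \<open>Im q = 0\<close> have "Im z = 0" unfolding qN by simp
  hence zr: "z = of_real (Re z)" by (simp add: complex_eq_iff)
  have "of_real (poly (char_poly S) (Re z)) = poly (char_poly Sc) z"
    by (subst zr) (simp only: Sc_def of_real_hom.char_poly_hom[OF S] of_real_hom.poly_map_poly)
  hence "poly (char_poly S) (Re z) = 0" using root by simp
  thus ?thesis using eigenvalue_root_char_poly[OF S] by blast
qed

definition orthonormal_mat :: "nat \<Rightarrow> real mat \<Rightarrow> bool" where
  "orthonormal_mat n Q \<longleftrightarrow> Q \<in> carrier_mat n n \<and> transpose_mat Q * Q = 1\<^sub>m n"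

lemma orthonormal_matD:
  assumes "orthonormal_mat n Q"
  shows "Q \<in> carrier_mat n n" "transpose_mat Q * Q = 1\<^sub>m n" "Q * transpose_mat Q = 1\<^sub>m n"
  using assms mat_mult_left_right_inverse[of "transpose_mat Q" n Q]
  unfolding orthonormal_mat_def by auto

lemma orthonormal_mat_transpose: "orthonormal_mat n Q \<Longrightarrow> orthonormal_mat n (transpose_mat Q)"
  using orthonormal_matD[of n Q] unfolding orthonormal_mat_def by auto

lemma orthonormal_mat_mult:
  assumes P: "orthonormal_mat n P" and Q: "orthonormal_mat n Q"
  shows "orthonormal_mat n (P * Q)"
proof -
  note P = orthonormal_matD[OF P] and Q = orthonormal_matD[OF Q]
  have "transpose_mat (P * Q) * (P * Q) = transpose_mat Q * (transpose_mat P * (P * Q))"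
    using P Q by (simp add: transpose_mult[of _ n n _ n] assoc_mult_mat[of _ n n _ n _ n])
  also have "transpose_mat P * (P * Q) = (transpose_mat P * P) * Q"
    using P Q by (intro assoc_mult_mat[symmetric]) auto
  also have "\<dots> = Q" using P Q by simp
  finally show ?thesis using P Q unfolding orthonormal_mat_def by auto
qed

lemma orthonormal_mat_scalar_prod:
  assumes Q: "orthonormal_mat n Q" and v: "v \<in> carrier_vec n" and w: "w \<in> carrier_vec n"
  shows "(Q *\<^sub>v v) \<bullet> (Q *\<^sub>v w) = v \<bullet> w"
proof -
  note Q = orthonormal_matD[OF Q]
  have "(Q *\<^sub>v v) \<bullet> (Q *\<^sub>v w) = (transpose_mat Q *\<^sub>v (Q *\<^sub>v v)) \<bullet> w"
    using Q v w by (intro transpose_vec_mult_scalar[symmetric]) auto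
  also have "transpose_mat Q *\<^sub>v (Q *\<^sub>v v) = v"
    using Q v by (simp add: assoc_mult_mat_vec[symmetric, of _ n n _ n])
  finally show ?thesis .
qed

lemma orthonormal_mat_mult_transpose_vec:
  assumes Q: "orthonormal_mat n Q" and v: "v \<in> carrier_vec n"
  shows "Q *\<^sub>v (transpose_mat Q *\<^sub>v v) = v"
  using orthonormal_matD[OF Q] v by (simp add: assoc_mult_mat_vec[symmetric, of _ n n _ n])

lemma orthonormal_mat_with_first_col:
  assumes u: "u \<in> carrier_vec n" and uu: "u \<bullet> u = 1"
  shows "\<exists>Q. orthonormal_mat n Q \<and> col Q 0 = u"
proof -
  have n: "0 < n" using u uu by (cases n) (auto simp: scalar_prod_def)
  have "\<exists>Q. orthonormal_mat n Q \<and> (\<forall>i<n. Q $$ (i, 0) = u $ i)"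
  proof (cases "u $ 0 = 1")
    case True
    have "(\<Sum>i\<in>{0..<n}. u $ i * u $ i) = u $ 0 * u $ 0 + (\<Sum>i\<in>{1..<n}. u $ i * u $ i)"
      by (subst sum.atLeast_Suc_lessThan[OF n]) simp
    hence "(\<Sum>i\<in>{1..<n}. (u $ i)\<^sup>2) = 0"
      using uu True u by (simp add: scalar_prod_def power2_eq_square)
    hence "\<forall>i\<in>{1..<n}. (u $ i)\<^sup>2 = 0" by (subst (asm) sum_nonneg_eq_0_iff) auto
    hence "\<And>i. 0 < i \<Longrightarrow> i < n \<Longrightarrow> u $ i = 0" by auto
    thus ?thesis using True by (intro exI[of _ "1\<^sub>m n"]) (auto simp: orthonormal_mat_def)
  next
    case False
    text \<open>The Householder reflection \<open>1 - c w w\<^sup>T\<close> along \<open>w = e\<^sub>0 - u\<close> swaps \<open>e\<^sub>0\<close> and \<open>u\<close>.\<close>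
    define w where "w = unit_vec n 0 - u"
    have w: "w \<in> carrier_vec n" using u unfolding w_def by auto
    have wi: "\<And>i. i < n \<Longrightarrow> w $ i = (if i = 0 then 1 else 0) - u $ i"
      using u unfolding w_def by auto
    have ww: "w \<bullet> w = 2 - 2 * u $ 0"
    proof -
      have "w \<bullet> w = (\<Sum>i<n. ((if i = 0 then 1 else 0) - u $ i) * ((if i = 0 then 1 else 0) - u $ i))"
        using w wi by (auto simp: scalar_prod_def lessThan_atLeast0 intro!: sum.cong)
      also have "\<dots> = (\<Sum>i<n. (if i = 0 then 1 else 0) - 2 * (if i = 0 then u $ i else 0) + u $ i * u $ i)"
        by (intro sum.cong refl) (auto simp: algebra_simps)
      also have "\<dots> = 1 - 2 * u $ 0 + (\<Sum>i<n. u $ i * u $ i)"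
        using n by (simp add: sum.distrib sum_subtractf sum_distrib_left[symmetric])
      also have "(\<Sum>i<n. u $ i * u $ i) = 1" using uu u by (simp add: scalar_prod_def lessThan_atLeast0)
      finally show ?thesis by simp
    qed
    define c where "c = 2 / (w \<bullet> w)"
    have cw0: "c * w $ 0 = 1" using False n wi[of 0] unfolding c_def ww by (simp add: field_simps)
    have cww: "c * (w \<bullet> w) = 2" using False unfolding c_def ww by (simp add: field_simps)
    define Q where "Q = mat n n (\<lambda>(i,j). (if i = j then 1 else 0) - c * w $ i * w $ j)"
    have Q: "Q \<in> carrier_mat n n" unfolding Q_def by auto
    have QT: "transpose_mat Q = Q" unfolding Q_def by (rule eq_matI) (auto simp: mult_ac)
    have QQ: "Q * Q = 1\<^sub>m n"
    proof (rule eq_matI)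
      fix i j assume "i < dim_row (1\<^sub>m n)" and "j < dim_col (1\<^sub>m n)"
      hence i: "i < n" and j: "j < n" by auto
      have "(Q * Q) $$ (i,j) = (\<Sum>k<n. ((if i = k then 1 else 0) - c * w $ i * w $ k)
          * ((if k = j then 1 else 0) - c * w $ k * w $ j))"
        using i j unfolding Q_def by (auto simp: scalar_prod_def lessThan_atLeast0 intro!: sum.cong)
      also have "\<dots> = (\<Sum>k<n. (if i = k then (if k = j then 1 else 0) else 0)
          - (if i = k then c * w $ k * w $ j else 0) - (if k = j then c * w $ i * w $ k else 0)
          + (c * c * w $ i * w $ j) * (w $ k * w $ k))"
        by (intro sum.cong refl) (auto simp: algebra_simps)
      also have "\<dots> = (if i = j then 1 else 0) - c * w $ i * w $ j - c * w $ i * w $ j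
          + (c * c * w $ i * w $ j) * (\<Sum>k<n. w $ k * w $ k)"
        using i j by (simp add: sum.distrib sum_subtractf sum_distrib_left[symmetric])
      also have "(\<Sum>k<n. w $ k * w $ k) = w \<bullet> w" using w by (simp add: scalar_prod_def lessThan_atLeast0)
      also have "(c * c * w $ i * w $ j) * (w \<bullet> w) = 2 * c * w $ i * w $ j"
        using cww by (metis (no_types, opaque_lifting) mult.assoc mult.commute)
      finally show "(Q * Q) $$ (i,j) = 1\<^sub>m n $$ (i,j)" using i j by simp
    qed (use Q in auto)
    have "Q $$ (i, 0) = u $ i" if i: "i < n" for i
    proof -
      have "Q $$ (i, 0) = (if i = 0 then 1 else 0) - w $ i * (c * w $ 0)" using i n unfolding Q_def by auto
      thus ?thesis unfolding cw0 using wi[OF i] by simp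
    qed
    moreover have "orthonormal_mat n Q" unfolding orthonormal_mat_def QT using Q QQ by auto
    ultimately show ?thesis by blast
  qed
  then obtain Q where "orthonormal_mat n Q" and "\<forall>i<n. Q $$ (i, 0) = u $ i" by blast
  moreover from this have "col Q 0 = u" using u n orthonormal_matD(1)[of n Q] by (intro eq_vecI) auto
  ultimately show ?thesis by blast
qed

lemma real_symmetric_has_unit_eigenvector:
  fixes S :: "real mat"
  assumes S: "S \<in> carrier_mat n n" and sym: "transpose_mat S = S" and n: "0 < n"
  shows "\<exists>d u. u \<in> carrier_vec n \<and> u \<bullet> u = 1 \<and> S *\<^sub>v u = d \<cdot>\<^sub>v u"
proof -
  obtain d v where "eigenvector S v d"
    using real_symmetric_has_eigenvalue[OF S sym n] unfolding eigenvalue_def by auto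
  hence v: "v \<in> carrier_vec n" and v0: "v \<noteq> 0\<^sub>v n" and Sv: "S *\<^sub>v v = d \<cdot>\<^sub>v v"
    unfolding eigenvector_def using S by auto
  have vv: "v \<bullet> v > 0" by (rule real_sq_norm_vec_pos[OF v v0])
  define u where "u = (1 / sqrt (v \<bullet> v)) \<cdot>\<^sub>v v"
  have u: "u \<in> carrier_vec n" using v unfolding u_def by auto
  have "u \<bullet> u = (1 / sqrt (v \<bullet> v)) * (1 / sqrt (v \<bullet> v)) * (v \<bullet> v)"
    unfolding u_def using v
    by (simp add: smult_scalar_prod_distrib[of _ n] scalar_prod_smult_distrib[of _ n] mult.assoc)
  also have "\<dots> = 1" using vv by (simp add: real_sqrt_mult[symmetric])
  finally have "u \<bullet> u = 1" .
  moreover have "S *\<^sub>v u = d \<cdot>\<^sub>v u" unfolding u_def using S v Sv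
    by (simp add: mult_mat_vec[of _ n n] smult_smult_assoc mult.commute)
  ultimately show ?thesis using u by blast
qed

lemma four_block_diag_mult:
  fixes A B C D :: "'a :: comm_ring_1 mat"
  assumes "A \<in> carrier_mat 1 1" and "B \<in> carrier_mat 1 1"
    and "C \<in> carrier_mat k k" and "D \<in> carrier_mat k k"
  shows "four_block_mat A (0\<^sub>m 1 k) (0\<^sub>m k 1) C * four_block_mat B (0\<^sub>m 1 k) (0\<^sub>m k 1) D
     = four_block_mat (A * B) (0\<^sub>m 1 k) (0\<^sub>m k 1) (C * D)"
  using assms by (subst mult_four_block_mat) auto

lemma assoc_mult_mat5:
  assumes "A \<in> carrier_mat n n" "B \<in> carrier_mat n n" "C \<in> carrier_mat n n"
    "D \<in> carrier_mat n n" "E \<in> carrier_mat n n"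
  shows "A * (B * C * D) * E = (A * B) * C * (D * E)"
  using assms by (simp add: assoc_mult_mat[of _ n n _ n _ n])

theorem real_symmetric_diagonalization:
  fixes S :: "real mat"
  assumes "S \<in> carrier_mat n n" and "transpose_mat S = S"
  shows "\<exists>Q d. orthonormal_mat n Q \<and> S = Q * mat_diag n d * transpose_mat Q"
  using assms
proof (induction n arbitrary: S)
  case 0
  show ?case using 0 by (intro exI[of _ "1\<^sub>m 0"] exI[of _ "\<lambda>_. 0"]) (auto simp: orthonormal_mat_def)
next
  case (Suc k S)
  let ?n = "Suc k"
  have S: "S \<in> carrier_mat ?n ?n" and sym: "transpose_mat S = S" by fact+
  obtain d0 u where u: "u \<in> carrier_vec ?n" and uu: "u \<bullet> u = 1" and Su: "S *\<^sub>v u = d0 \<cdot>\<^sub>v u"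
    using real_symmetric_has_unit_eigenvector[OF S sym] by auto
  obtain Q1 where Q1o: "orthonormal_mat ?n Q1" and colQ1: "col Q1 0 = u"
    using orthonormal_mat_with_first_col[OF u uu] by auto
  note Q1 = orthonormal_matD[OF Q1o]
  text \<open>In the basis \<open>Q1\<close>, whose first vector is the eigenvector \<open>u\<close>, \<open>S\<close> splits off a \<open>1 \<times> 1\<close> block.\<close>
  define T where "T = transpose_mat Q1 * S * Q1"
  have T: "T \<in> carrier_mat ?n ?n" unfolding T_def using Q1 S by auto
  have Tsym: "transpose_mat T = T" unfolding T_def using Q1 S sym
    by (simp add: transpose_mult[of _ ?n ?n _ ?n] assoc_mult_mat[of _ ?n ?n _ ?n _ ?n])
  have "col T 0 = transpose_mat Q1 *\<^sub>v col (S * Q1) 0"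
    unfolding T_def using Q1 S
    by (simp add: assoc_mult_mat[of _ ?n ?n _ ?n _ ?n] col_mult2[of "transpose_mat Q1" ?n ?n "S * Q1" ?n])
  also have "col (S * Q1) 0 = S *\<^sub>v col Q1 0" using Q1 S by (intro col_mult2) auto
  also have "transpose_mat Q1 *\<^sub>v (S *\<^sub>v col Q1 0) = d0 \<cdot>\<^sub>v (transpose_mat Q1 *\<^sub>v col Q1 0)"
    unfolding colQ1 Su using Q1 u by (simp add: mult_mat_vec[of _ ?n ?n])
  also have "transpose_mat Q1 *\<^sub>v col Q1 0 = col (transpose_mat Q1 * Q1) 0"
    using Q1 by (intro col_mult2[symmetric]) auto
  finally have colT: "col T 0 = d0 \<cdot>\<^sub>v unit_vec ?n 0" using Q1 by simp
  have T0: "T $$ (i, 0) = (if i = 0 then d0 else 0)" if "i < ?n" for i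
    using arg_cong[OF colT, of "\<lambda>v. v $ i"] that T by (auto simp: unit_vec_def)
  have T0': "T $$ (0, j) = (if j = 0 then d0 else 0)" if "j < ?n" for j
    using T0[OF that] Tsym T that by (metis carrier_matD index_transpose_mat(1) zero_less_Suc)
  define T4 where "T4 = mat k k (\<lambda>(i,j). T $$ (Suc i, Suc j))"
  have T4: "T4 \<in> carrier_mat k k" unfolding T4_def by auto
  have T4sym: "transpose_mat T4 = T4" unfolding T4_def using Tsym T
    by (intro eq_matI, auto) (metis Suc_less_eq carrier_matD index_transpose_mat(1))
  obtain Q4 d4 where Q4o: "orthonormal_mat k Q4" and T4eq: "T4 = Q4 * mat_diag k d4 * transpose_mat Q4"
    using Suc.IH[OF T4 T4sym] by auto
  note Q4 = orthonormal_matD[OF Q4o]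
  define Q2 where "Q2 = four_block_mat (1\<^sub>m 1) (0\<^sub>m 1 k) (0\<^sub>m k 1) Q4"
  define D1 where "D1 = mat 1 1 (\<lambda>_. d0)"
  define d where "d = (\<lambda>i. if i = 0 then d0 else d4 (i - 1))"
  have D1: "D1 \<in> carrier_mat 1 1" unfolding D1_def by auto
  have Q2: "Q2 \<in> carrier_mat ?n ?n" unfolding Q2_def using Q4 by auto
  have Q2T: "transpose_mat Q2 = four_block_mat (1\<^sub>m 1) (0\<^sub>m 1 k) (0\<^sub>m k 1) (transpose_mat Q4)"
    unfolding Q2_def using Q4 by (subst transpose_four_block_mat) auto
  have "transpose_mat Q2 * Q2 = four_block_mat (1\<^sub>m 1 * 1\<^sub>m 1) (0\<^sub>m 1 k) (0\<^sub>m k 1) (transpose_mat Q4 * Q4)"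
    unfolding Q2T unfolding Q2_def using Q4 by (intro four_block_diag_mult) auto
  also have "\<dots> = 1\<^sub>m ?n" using Q4 by (intro eq_matI) auto
  finally have Q2o: "orthonormal_mat ?n Q2" unfolding orthonormal_mat_def using Q2 by auto
  have Deq: "mat_diag ?n d = four_block_mat D1 (0\<^sub>m 1 k) (0\<^sub>m k 1) (mat_diag k d4)"
    by (rule eq_matI) (auto simp: d_def D1_def)
  have "Q2 * mat_diag ?n d = four_block_mat (1\<^sub>m 1 * D1) (0\<^sub>m 1 k) (0\<^sub>m k 1) (Q4 * mat_diag k d4)"
    unfolding Deq Q2_def using Q4 D1 by (intro four_block_diag_mult) auto
  moreover have "four_block_mat (1\<^sub>m 1 * D1) (0\<^sub>m 1 k) (0\<^sub>m k 1) (Q4 * mat_diag k d4)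
      * four_block_mat (1\<^sub>m 1) (0\<^sub>m 1 k) (0\<^sub>m k 1) (transpose_mat Q4)
      = four_block_mat (1\<^sub>m 1 * D1 * 1\<^sub>m 1) (0\<^sub>m 1 k) (0\<^sub>m k 1) (Q4 * mat_diag k d4 * transpose_mat Q4)"
    using Q4 D1 by (intro four_block_diag_mult) auto
  ultimately have "Q2 * mat_diag ?n d * transpose_mat Q2
      = four_block_mat D1 (0\<^sub>m 1 k) (0\<^sub>m k 1) (Q4 * mat_diag k d4 * transpose_mat Q4)"
    unfolding Q2T using D1 by simp
  also have "\<dots> = T" unfolding T4eq[symmetric]
    by (rule eq_matI, insert T T0 T0', auto simp: T4_def D1_def)
  finally have TQ2: "T = Q2 * mat_diag ?n d * transpose_mat Q2" ..
  have "Q1 * T * transpose_mat Q1 = (Q1 * transpose_mat Q1) * S * (Q1 * transpose_mat Q1)"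
    unfolding T_def using Q1(1) S by (simp add: assoc_mult_mat[of _ ?n ?n _ ?n _ ?n])
  hence "S = Q1 * T * transpose_mat Q1" using Q1 S by simp
  also have "\<dots> = (Q1 * Q2) * mat_diag ?n d * transpose_mat (Q1 * Q2)"
    unfolding TQ2 using Q1 Q2
    by (simp add: assoc_mult_mat5[of Q1 ?n] transpose_mult[of Q1 ?n ?n Q2 ?n])
  finally show ?case using orthonormal_mat_mult[OF Q1o Q2o] by blast
qed

lemma orthonormal_mat_permute_diag:
  assumes \<pi>: "bij_betw \<pi> {..<n} {..<n}"
  shows "\<exists>P. orthonormal_mat n P \<and> P * mat_diag n (d \<circ> \<pi>) * transpose_mat P = mat_diag n (d :: nat \<Rightarrow> real)"
proof -
  have \<pi>n: "\<And>j. j < n \<Longrightarrow> \<pi> j < n" using \<pi> by (meson bij_betwE lessThan_iff)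
  have \<pi>inj: "\<And>i j. i < n \<Longrightarrow> j < n \<Longrightarrow> \<pi> i = \<pi> j \<longleftrightarrow> i = j"
    using \<pi> by (metis bij_betw_iff_bijections lessThan_iff)
  define P where "P = mat n n (\<lambda>(k,j). if k = \<pi> j then 1 else (0::real))"
  have P: "P \<in> carrier_mat n n" unfolding P_def by auto
  have "transpose_mat P * P = 1\<^sub>m n"
  proof (rule eq_matI)
    fix i j assume "i < dim_row (1\<^sub>m n)" "j < dim_col (1\<^sub>m n)"
    hence i: "i < n" and j: "j < n" by auto
    have "(transpose_mat P * P) $$ (i,j) = (\<Sum>k = 0..<n. (if k = \<pi> i then 1 else 0) * (if k = \<pi> j then 1 else 0))"
      using i j unfolding P_def by (auto simp: scalar_prod_def intro!: sum.cong)
    also have "\<dots> = (\<Sum>k = 0..<n. if k = \<pi> i then (if k = \<pi> j then 1 else 0) else 0)"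
      by (rule sum.cong) auto
    also have "\<dots> = 1\<^sub>m n $$ (i,j)" using i j \<pi>n \<pi>inj by simp
    finally show "(transpose_mat P * P) $$ (i,j) = 1\<^sub>m n $$ (i,j)" .
  qed (use P in auto)
  hence Po: "orthonormal_mat n P" unfolding orthonormal_mat_def using P by auto
  have "P * mat_diag n (d \<circ> \<pi>) = mat_diag n d * P"
  proof (rule eq_matI)
    fix i j assume "i < dim_row (mat_diag n d * P)" "j < dim_col (mat_diag n d * P)"
    hence i: "i < n" and j: "j < n" using P by auto
    have "(P * mat_diag n (d \<circ> \<pi>)) $$ (i,j)
        = (\<Sum>k = 0..<n. (if i = \<pi> k then 1 else 0) * (if k = j then d (\<pi> j) else 0))"
      using i j unfolding P_def by (auto simp: scalar_prod_def intro!: sum.cong)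
    also have "\<dots> = (\<Sum>k = 0..<n. if k = j then (if i = \<pi> j then 1 else 0) * d (\<pi> j) else 0)"
      by (rule sum.cong) auto
    finally have 1: "(P * mat_diag n (d \<circ> \<pi>)) $$ (i,j) = (if i = \<pi> j then d i else 0)" using j by simp
    have "(mat_diag n d * P) $$ (i,j) = (\<Sum>k = 0..<n. (if i = k then d i else 0) * (if k = \<pi> j then 1 else 0))"
      using i j unfolding P_def by (auto simp: scalar_prod_def intro!: sum.cong)
    also have "\<dots> = (\<Sum>k = 0..<n. if k = i then d i * (if i = \<pi> j then 1 else 0) else 0)"
      by (rule sum.cong) auto
    finally have 2: "(mat_diag n d * P) $$ (i,j) = (if i = \<pi> j then d i else 0)" using i by simp
    show "(P * mat_diag n (d \<circ> \<pi>)) $$ (i,j) = (mat_diag n d * P) $$ (i,j)" unfolding 1 2 ..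
  qed (use P in auto)
  hence "P * mat_diag n (d \<circ> \<pi>) * transpose_mat P = mat_diag n d * (P * transpose_mat P)"
    using P by (simp add: assoc_mult_mat[of _ n n _ n _ n])
  thus ?thesis using Po orthonormal_matD(3)[OF Po] by auto
qed

lemma real_symmetric_sorted_diagonalization:
  fixes S :: "real mat"
  assumes S: "S \<in> carrier_mat n n" and sym: "transpose_mat S = S"
  shows "\<exists>Q d. orthonormal_mat n Q \<and> S = Q * mat_diag n d * transpose_mat Q
    \<and> (\<forall>i j. i \<le> j \<longrightarrow> j < n \<longrightarrow> d j \<le> d i)"
proof -
  obtain Q0 d0 where Q0o: "orthonormal_mat n Q0" and SQ: "S = Q0 * mat_diag n d0 * transpose_mat Q0"
    using real_symmetric_diagonalization[OF S sym] by auto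
  define xs where "xs = sort_key (\<lambda>i. - d0 i) [0..<n]"
  have mxs: "mset xs = mset [0..<n]" unfolding xs_def by simp
  have len: "length xs = n" using mset_eq_length[OF mxs] by simp
  have "bij_betw (\<lambda>j. xs ! j) {..<n} {..<n}"
    using bij_betw_nth[of xs] mset_eq_imp_distinct_iff[OF mxs] mset_eq_setD[OF mxs] len
    by (simp add: lessThan_atLeast0)
  then obtain P where Po: "orthonormal_mat n P"
    and PDP: "P * mat_diag n (d0 \<circ> (\<lambda>j. xs ! j)) * transpose_mat P = mat_diag n d0"
    using orthonormal_mat_permute_diag by blast
  have sorted: "sorted (map (\<lambda>i. - d0 i) xs)" unfolding xs_def by (rule sorted_sort_key)
  have "\<forall>i j. i \<le> j \<longrightarrow> j < n \<longrightarrow> (d0 \<circ> (\<lambda>j. xs ! j)) j \<le> (d0 \<circ> (\<lambda>j. xs ! j)) i"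
    using sorted_nth_mono[OF sorted] len by fastforce
  moreover note Q0 = orthonormal_matD[OF Q0o] and P = orthonormal_matD[OF Po]
  have "S = (Q0 * P) * mat_diag n (d0 \<circ> (\<lambda>j. xs ! j)) * transpose_mat (Q0 * P)"
    unfolding SQ PDP[symmetric] using Q0 P by (simp add: assoc_mult_mat5[of Q0 n] transpose_mult[of Q0 n n P n])
  ultimately show ?thesis using orthonormal_mat_mult[OF Q0o Po] by blast
qed

section \<open>Singular value decomposition\<close>

lemma proots_prod_linear_factors: "proots (\<Prod>a\<leftarrow>xs. [:- a, 1:]) = mset (xs :: real list)"
proof (induction xs)
  case (Cons a xs)
  have "(\<Prod>a\<leftarrow>xs. [:- a, 1:]) \<noteq> (0 :: real poly)" by (auto simp: prod_list_zero_iff)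
  thus ?case using Cons.IH by (simp add: proots_mult del: mult_pCons_left)
qed simp

lemma sum_weighted_unit_vec:
  "i < n \<Longrightarrow> (\<Sum>k<n. d k * (unit_vec n i $ k)\<^sup>2) = (d i :: real)"
  by (simp add: unit_vec_def if_distrib[of "\<lambda>x. d _ * x\<^sup>2"] cong: if_cong)

text \<open>\<open>Q\<close> diagonalizes \<open>M\<^sup>T M\<close> with eigenvalues \<open>d 0 \<ge> d 1 \<ge> \<dots>\<close>, the squared singular values of \<open>M\<close>.\<close>
definition svd_witness :: "real mat \<Rightarrow> nat \<Rightarrow> real mat \<Rightarrow> (nat \<Rightarrow> real) \<Rightarrow> bool" where
  "svd_witness M c Q d \<longleftrightarrow> orthonormal_mat c Q \<and> (\<forall>i<c. 0 \<le> d i)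
    \<and> (\<forall>i j. i \<le> j \<longrightarrow> j < c \<longrightarrow> d j \<le> d i)
    \<and> singular_values M = image_mset (\<lambda>i. sqrt (d i)) (mset [0..<c])
    \<and> (\<forall>v\<in>carrier_vec c. (M *\<^sub>v (Q *\<^sub>v v)) \<bullet> (M *\<^sub>v (Q *\<^sub>v v)) = (\<Sum>i<c. d i * (v $ i)\<^sup>2))"

lemma svd_witness_exists:
  assumes M: "M \<in> carrier_mat r c"
  shows "\<exists>Q d. svd_witness M c Q d"
proof -
  define S where "S = transpose_mat M * M"
  have S: "S \<in> carrier_mat c c" unfolding S_def using M by auto
  have sym: "transpose_mat S = S" unfolding S_def using M by (simp add: transpose_mult[of _ c r _ c])
  obtain Q d where Qo: "orthonormal_mat c Q" and SQ: "S = Q * mat_diag c d * transpose_mat Q"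
    and sorted: "\<forall>i j. i \<le> j \<longrightarrow> j < c \<longrightarrow> d j \<le> d i"
    using real_symmetric_sorted_diagonalization[OF S sym] by auto
  note Q = orthonormal_matD[OF Qo]
  have "S * Q = Q * mat_diag c d * (transpose_mat Q * Q)"
    unfolding SQ using Q by (intro assoc_mult_mat) auto
  hence SQ2: "S * Q = Q * mat_diag c d" using Q by simp
  have quad: "(M *\<^sub>v (Q *\<^sub>v v)) \<bullet> (M *\<^sub>v (Q *\<^sub>v v)) = (\<Sum>i<c. d i * (v $ i)\<^sup>2)"
    if v: "v \<in> carrier_vec c" for v
  proof -
    define x where "x = Q *\<^sub>v v"
    have x: "x \<in> carrier_vec c" unfolding x_def using Q v by auto
    have "(M *\<^sub>v x) \<bullet> (M *\<^sub>v x) = (transpose_mat M *\<^sub>v (M *\<^sub>v x)) \<bullet> x"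
      using M x by (intro transpose_vec_mult_scalar[symmetric]) auto
    also have "transpose_mat M *\<^sub>v (M *\<^sub>v x) = S *\<^sub>v x"
      unfolding S_def using M x by (simp add: assoc_mult_mat_vec[of _ c r _ c])
    also have "S *\<^sub>v x = Q *\<^sub>v (mat_diag c d *\<^sub>v v)"
      unfolding x_def using S Q v by (simp add: assoc_mult_mat_vec[of _ c c _ c, symmetric] SQ2)
    also have "(Q *\<^sub>v (mat_diag c d *\<^sub>v v)) \<bullet> x = (mat_diag c d *\<^sub>v v) \<bullet> v"
      unfolding x_def using Q v by (intro orthonormal_mat_scalar_prod[OF Qo]) (simp add: mat_diag_mult_vec)
    also have "\<dots> = (\<Sum>i<c. d i * (v $ i)\<^sup>2)"
      using v by (simp add: mat_diag_mult_vec scalar_prod_def lessThan_atLeast0 power2_eq_square mult.assoc)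
    finally show ?thesis unfolding x_def .
  qed
  have nonneg: "0 \<le> d i" if "i < c" for i
    using quad[of "unit_vec c i"] sum_weighted_unit_vec[OF that]
      real_sq_norm_vec_nonneg[of "M *\<^sub>v (Q *\<^sub>v unit_vec c i)"] by simp
  have "similar_mat S (mat_diag c d)" unfolding similar_mat_def similar_mat_wit_def Let_def
    using S Q SQ by (intro exI[of _ Q] exI[of _ "transpose_mat Q"]) auto
  moreover have "diag_mat (mat_diag c d) = map d [0..<c]" unfolding diag_mat_def by auto
  ultimately have cp: "char_poly S = (\<Prod>a\<leftarrow>map d [0..<c]. [:- a, 1:])"
    by (simp add: char_poly_similar char_poly_upper_triangular[of _ c] upper_triangular_def)
  have "proots (char_poly S) = mset (map d [0..<c])" unfolding cp by (rule proots_prod_linear_factors)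
  hence "singular_values M = image_mset (\<lambda>i. sqrt (d i)) (mset [0..<c])"
    unfolding singular_values_def S_def[symmetric] by (simp add: multiset.map_comp o_def)
  hence "svd_witness M c Q d" unfolding svd_witness_def using Qo nonneg sorted quad by simp
  thus ?thesis by blast
qed

lemma mult_unit_vec_eq_col: "A \<in> carrier_mat n m \<Longrightarrow> i < m \<Longrightarrow> A *\<^sub>v unit_vec m i = col (A :: real mat) i"
  by (intro eq_vecI) auto

lemma svd_witness_col:
  assumes "svd_witness M c Q d" and "i < c"
  shows "(M *\<^sub>v col Q i) \<bullet> (M *\<^sub>v col Q i) = d i"
  using assms sum_weighted_unit_vec[OF assms(2)]
    mult_unit_vec_eq_col[OF orthonormal_matD(1), of c Q i]
  unfolding svd_witness_def by (metis unit_vec_carrier)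

lemma spectral_norm_svd:
  assumes "svd_witness M c Q d"
  shows "spectral_norm M = (if c = 0 then 0 else sqrt (d 0))"
proof -
  from assms have nonneg: "\<forall>i<c. 0 \<le> d i" and sorted: "\<forall>i j. i \<le> j \<longrightarrow> j < c \<longrightarrow> d j \<le> d i"
    and "singular_values M = image_mset (\<lambda>i. sqrt (d i)) (mset [0..<c])"
    unfolding svd_witness_def by auto
  hence sv: "set_mset (singular_values M) = (\<lambda>i. sqrt (d i)) ` {0..<c}" by simp
  show ?thesis
  proof (cases "c = 0")
    case False
    have "Max (insert 0 ((\<lambda>i. sqrt (d i)) ` {0..<c})) = sqrt (d 0)"
      using sorted nonneg False by (intro Max_eqI) auto
    thus ?thesis unfolding spectral_norm_def sv using False by simp
  qed (simp add: spectral_norm_def sv)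
qed

lemma schatten_norm_svd:
  assumes "svd_witness M c Q d"
  shows "schatten_norm p M = (\<Sum>i<c. sqrt (d i) ^ p) powr (1 / real p)"
  using assms unfolding svd_witness_def schatten_norm_def
  by (simp add: multiset.map_comp o_def sum_unfold_sum_mset lessThan_atLeast0)

lemma svd_witness_lower_bound:
  assumes svd: "svd_witness M c Q d" and k: "k < c" and v: "v \<in> carrier_vec c"
    and supp: "\<And>i. k < i \<Longrightarrow> i < c \<Longrightarrow> v $ i = 0"
  shows "d k * (v \<bullet> v) \<le> (M *\<^sub>v (Q *\<^sub>v v)) \<bullet> (M *\<^sub>v (Q *\<^sub>v v))"
proof -
  from svd have sorted: "\<forall>i j. i \<le> j \<longrightarrow> j < c \<longrightarrow> d j \<le> d i"
    and quad: "\<forall>v\<in>carrier_vec c. (M *\<^sub>v (Q *\<^sub>v v)) \<bullet> (M *\<^sub>v (Q *\<^sub>v v)) = (\<Sum>i<c. d i * (v $ i)\<^sup>2)"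
    unfolding svd_witness_def by auto
  have "d k * (v \<bullet> v) = (\<Sum>i<c. d k * (v $ i)\<^sup>2)"
    by (simp add: sq_norm_vec_eq_sum[OF v] sum_distrib_left)
  also have "\<dots> \<le> (\<Sum>i<c. d i * (v $ i)\<^sup>2)"
  proof (rule sum_mono)
    fix i assume "i \<in> {..<c}"
    thus "d k * (v $ i)\<^sup>2 \<le> d i * (v $ i)\<^sup>2"
      using sorted k supp[of i] by (cases "i \<le> k") (auto intro: mult_right_mono)
  qed
  also have "\<dots> = (M *\<^sub>v (Q *\<^sub>v v)) \<bullet> (M *\<^sub>v (Q *\<^sub>v v))" using quad v by auto
  finally show ?thesis .
qed

lemma svd_witness_upper_bound:
  assumes svd: "svd_witness M c Q d" and k: "k < c" and x: "x \<in> carrier_vec c"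
    and orth: "\<And>j. j < k \<Longrightarrow> col Q j \<bullet> x = 0"
  shows "(M *\<^sub>v x) \<bullet> (M *\<^sub>v x) \<le> d k * (x \<bullet> x)"
proof -
  from svd have Qo: "orthonormal_mat c Q" and sorted: "\<forall>i j. i \<le> j \<longrightarrow> j < c \<longrightarrow> d j \<le> d i"
    and quad: "\<forall>v\<in>carrier_vec c. (M *\<^sub>v (Q *\<^sub>v v)) \<bullet> (M *\<^sub>v (Q *\<^sub>v v)) = (\<Sum>i<c. d i * (v $ i)\<^sup>2)"
    unfolding svd_witness_def by auto
  note Q = orthonormal_matD[OF Qo]
  define v where "v = transpose_mat Q *\<^sub>v x"
  have v: "v \<in> carrier_vec c" unfolding v_def using Q x by auto
  have v0: "v $ j = 0" if "j < k" for j unfolding v_def using orth[OF that] that k Q x by simp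
  have "(M *\<^sub>v x) \<bullet> (M *\<^sub>v x) = (\<Sum>i<c. d i * (v $ i)\<^sup>2)"
    using quad v orthonormal_mat_mult_transpose_vec[OF Qo x] unfolding v_def by auto
  also have "\<dots> \<le> (\<Sum>i<c. d k * (v $ i)\<^sup>2)"
  proof (rule sum_mono)
    fix i assume "i \<in> {..<c}"
    thus "d i * (v $ i)\<^sup>2 \<le> d k * (v $ i)\<^sup>2"
      using sorted v0[of i] by (cases "i < k") (auto intro: mult_right_mono)
  qed
  also have "\<dots> = d k * (v \<bullet> v)" by (simp add: sq_norm_vec_eq_sum[OF v] sum_distrib_left)
  also have "v \<bullet> v = x \<bullet> x"
    unfolding v_def using orthonormal_mat_scalar_prod[OF orthonormal_mat_transpose[OF Qo] x x] .
  finally show ?thesis .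
qed

section \<open>Spectral and Schatten norms\<close>

lemma power_powr_inverse: "0 \<le> (s :: real) \<Longrightarrow> 1 \<le> p \<Longrightarrow> (s ^ p) powr (1 / real p) = s"
  by (cases "s = 0") (auto simp: powr_realpow[symmetric] powr_powr)

lemma spectral_norm_nonneg: "0 \<le> spectral_norm M"
  unfolding spectral_norm_def by (rule Max_ge[THEN order_trans[rotated]]) auto

lemma schatten_norm_nonneg: "0 \<le> schatten_norm p M"
  unfolding schatten_norm_def by simp

lemma spectral_norm_bound:
  assumes M: "M \<in> carrier_mat r c" and x: "x \<in> carrier_vec c"
  shows "(M *\<^sub>v x) \<bullet> (M *\<^sub>v x) \<le> (spectral_norm M)\<^sup>2 * (x \<bullet> x)"
proof (cases "c = 0")
  case True
  hence "M *\<^sub>v x = 0\<^sub>v r" using M x by (intro eq_vecI) (auto simp: scalar_prod_def)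
  thus ?thesis by (simp add: real_sq_norm_vec_nonneg)
next
  case False
  obtain Q d where svd: "svd_witness M c Q d" using svd_witness_exists[OF M] by auto
  hence "0 \<le> d 0" using False unfolding svd_witness_def by auto
  thus ?thesis using svd_witness_upper_bound[OF svd _ x, of 0] spectral_norm_svd[OF svd] False by simp
qed

lemma spectral_norm_attained:
  assumes M: "M \<in> carrier_mat r c" and c: "0 < c"
  shows "\<exists>x\<in>carrier_vec c. x \<bullet> x = 1 \<and> (M *\<^sub>v x) \<bullet> (M *\<^sub>v x) = (spectral_norm M)\<^sup>2"
proof -
  obtain Q d where svd: "svd_witness M c Q d" using svd_witness_exists[OF M] by auto
  hence Qo: "orthonormal_mat c Q" and "0 \<le> d 0" using c unfolding svd_witness_def by auto
  hence "(M *\<^sub>v col Q 0) \<bullet> (M *\<^sub>v col Q 0) = (spectral_norm M)\<^sup>2"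
    using svd_witness_col[OF svd c] spectral_norm_svd[OF svd] c by simp
  moreover have "col Q 0 \<bullet> col Q 0 = 1"
    using orthonormal_mat_scalar_prod[OF Qo, of "unit_vec c 0" "unit_vec c 0"] c
      mult_unit_vec_eq_col[OF orthonormal_matD(1)[OF Qo] c] by simp
  ultimately show ?thesis using orthonormal_matD(1)[OF Qo] c by (intro bexI[of _ "col Q 0"]) auto
qed

lemma spectral_norm_le:
  assumes M: "M \<in> carrier_mat r c" and a: "0 \<le> a"
    and bound: "\<And>x. x \<in> carrier_vec c \<Longrightarrow> (M *\<^sub>v x) \<bullet> (M *\<^sub>v x) \<le> a\<^sup>2 * (x \<bullet> x)"
  shows "spectral_norm M \<le> a"
proof (cases "c = 0")
  case True
  obtain Q d where "svd_witness M c Q d" using svd_witness_exists[OF M] by auto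
  thus ?thesis using spectral_norm_svd True a by simp
next
  case False
  then obtain x where "x \<in> carrier_vec c" "x \<bullet> x = 1" "(M *\<^sub>v x) \<bullet> (M *\<^sub>v x) = (spectral_norm M)\<^sup>2"
    using spectral_norm_attained[OF M] by blast
  hence "(spectral_norm M)\<^sup>2 \<le> a\<^sup>2" using bound by fastforce
  thus ?thesis using a by (rule power2_le_imp_le)
qed

lemma spectral_norm_le_schatten_norm:
  assumes M: "M \<in> carrier_mat r c" and p: "1 \<le> p"
  shows "spectral_norm M \<le> schatten_norm p M"
proof -
  obtain Q d where svd: "svd_witness M c Q d" using svd_witness_exists[OF M] by auto
  hence nonneg: "\<forall>i<c. 0 \<le> d i" unfolding svd_witness_def by auto
  show ?thesis
  proof (cases "c = 0")
    case False
    have "sqrt (d 0) ^ p \<le> (\<Sum>i<c. sqrt (d i) ^ p)"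
      using False nonneg by (intro member_le_sum) auto
    hence "(sqrt (d 0) ^ p) powr (1 / real p) \<le> (\<Sum>i<c. sqrt (d i) ^ p) powr (1 / real p)"
      using p nonneg False by (intro powr_mono2) auto
    thus ?thesis
      using power_powr_inverse[OF _ p, of "sqrt (d 0)"] nonneg False
      unfolding spectral_norm_svd[OF svd] schatten_norm_svd[OF svd] by simp
  qed (simp add: spectral_norm_svd[OF svd] schatten_norm_nonneg)
qed

lemma schatten_norm_le_spectral_norm:
  assumes M: "M \<in> carrier_mat r c" and p: "1 \<le> p"
  shows "schatten_norm p M \<le> real c powr (1 / real p) * spectral_norm M"
proof -
  obtain Q d where svd: "svd_witness M c Q d" using svd_witness_exists[OF M] by auto
  hence nonneg: "\<forall>i<c. 0 \<le> d i" and sorted: "\<forall>i j. i \<le> j \<longrightarrow> j < c \<longrightarrow> d j \<le> d i"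
    unfolding svd_witness_def by auto
  show ?thesis
  proof (cases "c = 0")
    case False
    have "(\<Sum>i<c. sqrt (d i) ^ p) \<le> (\<Sum>i<c. sqrt (d 0) ^ p)"
      using sorted nonneg by (intro sum_mono power_mono) auto
    hence "(\<Sum>i<c. sqrt (d i) ^ p) powr (1 / real p) \<le> (real c * sqrt (d 0) ^ p) powr (1 / real p)"
      using p nonneg by (intro powr_mono2) (auto intro!: sum_nonneg)
    also have "\<dots> = real c powr (1 / real p) * sqrt (d 0)"
      using power_powr_inverse[OF _ p, of "sqrt (d 0)"] nonneg False by (simp add: powr_mult)
    finally show ?thesis unfolding spectral_norm_svd[OF svd] schatten_norm_svd[OF svd] using False by simp
  qed (simp add: schatten_norm_svd[OF svd])
qed

lemma spectral_norm_mult: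
  assumes A: "(A :: real mat) \<in> carrier_mat n k" and X: "X \<in> carrier_mat k m"
  shows "spectral_norm (A * X) \<le> spectral_norm A * spectral_norm X"
proof (rule spectral_norm_le)
  fix v :: "real vec" assume v: "v \<in> carrier_vec m"
  have Xv: "X *\<^sub>v v \<in> carrier_vec k" using X v by auto
  have "(A * X *\<^sub>v v) \<bullet> (A * X *\<^sub>v v) = (A *\<^sub>v (X *\<^sub>v v)) \<bullet> (A *\<^sub>v (X *\<^sub>v v))"
    using A X v by (simp add: assoc_mult_mat_vec[of _ n k _ m])
  also have "\<dots> \<le> (spectral_norm A)\<^sup>2 * ((X *\<^sub>v v) \<bullet> (X *\<^sub>v v))" by (rule spectral_norm_bound[OF A Xv])
  also have "\<dots> \<le> (spectral_norm A)\<^sup>2 * ((spectral_norm X)\<^sup>2 * (v \<bullet> v))"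
    by (rule mult_left_mono[OF spectral_norm_bound[OF X v]]) simp
  finally show "(A * X *\<^sub>v v) \<bullet> (A * X *\<^sub>v v) \<le> (spectral_norm A * spectral_norm X)\<^sup>2 * (v \<bullet> v)"
    by (simp add: power_mult_distrib mult.assoc)
qed (use A X spectral_norm_nonneg in auto)

lemma schatten_norm_2_eq_sum_col:
  assumes M: "M \<in> carrier_mat r c"
  shows "schatten_norm 2 M = sqrt (\<Sum>j<c. col M j \<bullet> col M j)"
proof -
  obtain Q d where svd: "svd_witness M c Q d" using svd_witness_exists[OF M] by auto
  hence Qo: "orthonormal_mat c Q" and nonneg: "\<forall>i<c. 0 \<le> d i" unfolding svd_witness_def by auto
  note Q = orthonormal_matD[OF Qo]
  have row_sum: "(\<Sum>i<c. (y \<bullet> col Q i)\<^sup>2) = y \<bullet> y" if y: "y \<in> carrier_vec c" for y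
  proof -
    have "(\<Sum>i<c. (y \<bullet> col Q i)\<^sup>2) = (transpose_mat Q *\<^sub>v y) \<bullet> (transpose_mat Q *\<^sub>v y)"
      using Q y by (auto simp: sq_norm_vec_eq_sum[of _ c] comm_scalar_prod[of _ c] intro!: sum.cong)
    also have "\<dots> = y \<bullet> y" using orthonormal_mat_scalar_prod[OF orthonormal_mat_transpose[OF Qo] y y] .
    finally show ?thesis .
  qed
  text \<open>Both sides compute \<open>\<Sum>\<^sub>k \<Sum>\<^sub>j M\<^sub>k\<^sub>j\<^sup>2\<close>: the left one in the orthonormal basis \<open>Q\<close>.\<close>
  have "(\<Sum>i<c. d i) = (\<Sum>i<c. \<Sum>k<r. (row M k \<bullet> col Q i)\<^sup>2)"
    using M Q by (intro sum.cong refl)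
      (auto simp: svd_witness_col[OF svd, symmetric] sq_norm_vec_eq_sum[of _ r])
  also have "\<dots> = (\<Sum>k<r. row M k \<bullet> row M k)"
    using M by (subst sum.swap) (auto simp: row_sum intro!: sum.cong)
  also have "\<dots> = (\<Sum>k<r. \<Sum>j<c. (M $$ (k,j))\<^sup>2)"
    using M by (intro sum.cong refl) (auto simp: sq_norm_vec_eq_sum[of _ c])
  also have "\<dots> = (\<Sum>j<c. col M j \<bullet> col M j)"
    using M by (subst sum.swap) (auto simp: sq_norm_vec_eq_sum[of _ r] intro!: sum.cong)
  finally have "(\<Sum>i<c. d i) = (\<Sum>j<c. col M j \<bullet> col M j)" .
  moreover have "(\<Sum>i<c. (sqrt (d i))\<^sup>2) = (\<Sum>i<c. d i)" using nonneg by simp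
  hence "schatten_norm 2 M = sqrt (\<Sum>i<c. d i)"
    unfolding schatten_norm_svd[OF svd] using nonneg by (simp, subst powr_half_sqrt) (auto intro: sum_nonneg)
  ultimately show ?thesis by simp
qed

lemma exists_nonzero_vec_orthogonal:
  fixes w :: "nat \<Rightarrow> 'a :: field vec"
  assumes w: "\<And>j. j < k \<Longrightarrow> w j \<in> carrier_vec (Suc k)"
  shows "\<exists>v\<in>carrier_vec (Suc k). v \<noteq> 0\<^sub>v (Suc k) \<and> (\<forall>j<k. w j \<bullet> v = 0)"
proof -
  define w' where "w' j = (if j < k then w j else 0\<^sub>v (Suc k))" for j
  define K where "K = mat\<^sub>r (Suc k) (Suc k) (\<lambda>j. if j = k then 0\<^sub>v (Suc k) else w' j)"
  have K: "K \<in> carrier_mat (Suc k) (Suc k)" unfolding K_def by auto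
  have "det K = 0" unfolding K_def by (rule det_row_0) (auto simp: w'_def w)
  then obtain v where v: "v \<in> carrier_vec (Suc k)" "v \<noteq> 0\<^sub>v (Suc k)" and Kv: "K *\<^sub>v v = 0\<^sub>v (Suc k)"
    using det_0_iff_vec_prod_zero_field[OF K] by auto
  have "w j \<bullet> v = 0" if "j < k" for j
    using arg_cong[OF Kv, of "\<lambda>u. u $ j"] that w[OF that] unfolding K_def w'_def by simp
  thus ?thesis using v by blast
qed

text \<open>One half of the Courant-Fischer min-max principle.\<close>
lemma svd_witness_mono:
  assumes svdM: "svd_witness M c Q \<mu>" and svdN: "svd_witness N c V \<nu>" and k: "k < c"
    and dominated: "\<And>x. x \<in> carrier_vec c \<Longrightarrow> (M *\<^sub>v x) \<bullet> (M *\<^sub>v x) \<le> a * ((N *\<^sub>v x) \<bullet> (N *\<^sub>v x))"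
    and a: "0 \<le> a"
  shows "\<mu> k \<le> a * \<nu> k"
proof -
  note Q = orthonormal_matD[OF conjunct1[OF svdM[unfolded svd_witness_def]]]
  note V = orthonormal_matD[OF conjunct1[OF svdN[unfolded svd_witness_def]]]
  text \<open>A nonzero \<open>x\<close> in the span of the first \<open>k + 1\<close> columns of \<open>Q\<close>, orthogonal to the first \<open>k\<close> of \<open>V\<close>.\<close>
  obtain \<beta> where \<beta>: "\<beta> \<in> carrier_vec (Suc k)" "\<beta> \<noteq> 0\<^sub>v (Suc k)"
    and orth_\<beta>: "\<forall>j<k. vec (Suc k) (\<lambda>i. col V j \<bullet> col Q i) \<bullet> \<beta> = 0"
    using exists_nonzero_vec_orthogonal[of k "\<lambda>j. vec (Suc k) (\<lambda>i. col V j \<bullet> col Q i)"] by auto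
  define v where "v = vec c (\<lambda>i. if i \<le> k then \<beta> $ i else 0)"
  have v: "v \<in> carrier_vec c" unfolding v_def by auto
  have "v \<bullet> v = (\<Sum>i<Suc k. (v $ i)\<^sup>2)"
    unfolding sq_norm_vec_eq_sum[OF v] using k by (intro sum.mono_neutral_right) (auto simp: v_def)
  also have "\<dots> = (\<Sum>i<Suc k. (\<beta> $ i)\<^sup>2)" using k by (intro sum.cong) (auto simp: v_def)
  also have "\<dots> = \<beta> \<bullet> \<beta>" by (rule sq_norm_vec_eq_sum[OF \<beta>(1), symmetric])
  finally have vv: "v \<bullet> v = \<beta> \<bullet> \<beta>" .
  define x where "x = Q *\<^sub>v v"
  have x: "x \<in> carrier_vec c" unfolding x_def using Q v by auto
  have cols: "col Q i \<in> carrier_vec c" "col V j \<in> carrier_vec c" for i j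
    using Q V col_dim[of Q i] col_dim[of V j] by auto
  have "col V j \<bullet> x = 0" if j: "j < k" for j
  proof -
    have "col V j \<bullet> x = (transpose_mat Q *\<^sub>v col V j) \<bullet> v"
      unfolding x_def using Q V v j k by (intro transpose_vec_mult_scalar[symmetric]) auto
    also have "\<dots> = (\<Sum>i<c. (transpose_mat Q *\<^sub>v col V j) $ i * v $ i)"
      using Q v by (simp add: scalar_prod_def lessThan_atLeast0)
    also have "\<dots> = (\<Sum>i<Suc k. (transpose_mat Q *\<^sub>v col V j) $ i * v $ i)"
      using k by (intro sum.mono_neutral_right) (auto simp: v_def)
    also have "\<dots> = (\<Sum>i<Suc k. (col V j \<bullet> col Q i) * \<beta> $ i)"
      using Q k by (intro sum.cong refl) (simp add: v_def comm_scalar_prod[OF cols(1) cols(2)])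
    also have "\<dots> = 0" using orth_\<beta> j \<beta>(1) by (simp add: scalar_prod_def lessThan_atLeast0)
    finally show ?thesis .
  qed
  hence "(N *\<^sub>v x) \<bullet> (N *\<^sub>v x) \<le> \<nu> k * (v \<bullet> v)"
    using svd_witness_upper_bound[OF svdN k x] orthonormal_mat_scalar_prod[OF _ v v]
      svdM unfolding x_def svd_witness_def by auto
  moreover have "\<mu> k * (v \<bullet> v) \<le> (M *\<^sub>v x) \<bullet> (M *\<^sub>v x)"
    unfolding x_def by (rule svd_witness_lower_bound[OF svdM k v]) (simp add: v_def)
  ultimately have "\<mu> k * (v \<bullet> v) \<le> (a * \<nu> k) * (v \<bullet> v)"
    using dominated[OF x] mult_left_mono[OF _ a] by (fastforce simp: mult.assoc)
  moreover have "0 < v \<bullet> v" unfolding vv using real_sq_norm_vec_pos[OF \<beta>] .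
  ultimately show ?thesis by simp
qed

lemma schatten_norm_le_of_dominated:
  assumes M: "M \<in> carrier_mat r c" and N: "N \<in> carrier_mat r' c" and a: "0 \<le> a" and p: "1 \<le> p"
    and dominated: "\<And>x. x \<in> carrier_vec c \<Longrightarrow> (M *\<^sub>v x) \<bullet> (M *\<^sub>v x) \<le> a\<^sup>2 * ((N *\<^sub>v x) \<bullet> (N *\<^sub>v x))"
  shows "schatten_norm p M \<le> a * schatten_norm p N"
proof -
  obtain Q \<mu> where svdM: "svd_witness M c Q \<mu>" using svd_witness_exists[OF M] by auto
  obtain V \<nu> where svdN: "svd_witness N c V \<nu>" using svd_witness_exists[OF N] by auto
  have nonneg: "\<forall>i<c. 0 \<le> \<mu> i" "\<forall>i<c. 0 \<le> \<nu> i" using svdM svdN unfolding svd_witness_def by auto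
  have "sqrt (\<mu> i) ^ p \<le> (a * sqrt (\<nu> i)) ^ p" if i: "i < c" for i
  proof -
    have "sqrt (\<mu> i) \<le> sqrt (a\<^sup>2 * \<nu> i)"
      using svd_witness_mono[OF svdM svdN i dominated] by simp
    thus ?thesis using a nonneg i by (intro power_mono) (auto simp: real_sqrt_mult)
  qed
  hence "(\<Sum>i<c. sqrt (\<mu> i) ^ p) \<le> (\<Sum>i<c. a ^ p * sqrt (\<nu> i) ^ p)"
    by (intro sum_mono) (simp add: power_mult_distrib)
  also have "\<dots> = a ^ p * (\<Sum>i<c. sqrt (\<nu> i) ^ p)" by (simp add: sum_distrib_left)
  finally have "(\<Sum>i<c. sqrt (\<mu> i) ^ p) powr (1 / real p)
      \<le> (a ^ p * (\<Sum>i<c. sqrt (\<nu> i) ^ p)) powr (1 / real p)"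
    using p nonneg by (intro powr_mono2) (auto intro!: sum_nonneg)
  also have "\<dots> = (a ^ p) powr (1 / real p) * (\<Sum>i<c. sqrt (\<nu> i) ^ p) powr (1 / real p)"
    using a nonneg by (simp add: powr_mult sum_nonneg)
  finally show ?thesis
    unfolding schatten_norm_svd[OF svdM] schatten_norm_svd[OF svdN] power_powr_inverse[OF a p] .
qed

section \<open>Block structures and the set \<open>D\<^sub>b\<close>\<close>

lemma block_structure_mono:
  assumes bs: "block_structure n m nb" and "a \<le> b" and "b \<le> m"
  shows "nb a \<le> nb b"
  using assms(2,3)
proof (induction b)
  case (Suc b)
  show ?case
  proof (cases "a = Suc b")
    case False
    hence "nb a \<le> nb b" using Suc by simp
    also have "nb b < nb (Suc b)" using bs Suc.prems unfolding block_structure_def by auto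
    finally show ?thesis by simp
  qed simp
qed simp

lemma block_structure_le: "block_structure n m nb \<Longrightarrow> j \<le> m \<Longrightarrow> nb j \<le> n"
  using block_structure_mono[of n m nb j m] unfolding block_structure_def by auto

lemma block_structure_pos: "block_structure n m nb \<Longrightarrow> 0 < m \<Longrightarrow> 0 < n"
  using block_structure_mono[of n m nb 1 m] unfolding block_structure_def by fastforce

lemma block_structure_block_exists:
  assumes bs: "block_structure n m nb" and i: "i < n"
  shows "\<exists>j<m. nb j \<le> i \<and> i < nb (Suc j)"
proof -
  have "k \<le> m \<Longrightarrow> i < nb k \<Longrightarrow> \<exists>j<k. nb j \<le> i \<and> i < nb (Suc j)" for k
  proof (induction k)
    case (Suc k)
    thus ?case by (cases "i < nb k") (auto intro: less_SucI)
  qed (use bs in \<open>simp add: block_structure_def\<close>)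
  thus ?thesis using bs i unfolding block_structure_def by auto
qed

lemma block_structure_block_unique:
  assumes bs: "block_structure n m nb" and "j1 < m" and "j2 < m"
    and "nb j1 \<le> i" "i < nb (Suc j1)" and "nb j2 \<le> i" "i < nb (Suc j2)"
  shows "j1 = j2"
proof (rule ccontr)
  assume "j1 \<noteq> j2"
  hence "nb (Suc j1) \<le> nb j2 \<or> nb (Suc j2) \<le> nb j1"
    using block_structure_mono[OF bs, of "Suc j1" j2] block_structure_mono[OF bs, of "Suc j2" j1]
      assms(2,3) by linarith
  thus False using assms(4-7) by linarith
qed

lemma block_structure_sum_blocks:
  assumes bs: "block_structure n m nb"
  shows "(\<Sum>j<m. \<Sum>i\<in>{nb j..<nb (Suc j)}. f i) = (\<Sum>i<n. f i)"
proof -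
  have "k \<le> m \<Longrightarrow> (\<Sum>j<k. \<Sum>i\<in>{nb j..<nb (Suc j)}. f i) = (\<Sum>i\<in>{0..<nb k}. f i)" for k
  proof (induction k)
    case (Suc k)
    thus ?case using block_structure_mono[OF bs, of k "Suc k"]
      by (simp add: sum.atLeastLessThan_concat)
  qed (use bs in \<open>simp add: block_structure_def\<close>)
  thus ?thesis using bs unfolding block_structure_def by (simp add: lessThan_atLeast0)
qed

lemma block_structure_sum_pick:
  assumes bs: "block_structure n m nb" and j0: "j0 < m" and i: "nb j0 \<le> i" "i < nb (Suc j0)"
  shows "(\<Sum>j<m. (if nb j \<le> i \<and> i < nb (Suc j) then g j else 0) * h j) = g j0 * (h j0 :: real)"
proof -
  have "(\<Sum>j<m. (if nb j \<le> i \<and> i < nb (Suc j) then g j else 0) * h j)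
      = (\<Sum>j<m. if j = j0 then g j0 * h j0 else 0)"
  proof (intro sum.cong refl)
    fix j assume "j \<in> {..<m}"
    thus "(if nb j \<le> i \<and> i < nb (Suc j) then g j else 0) * h j = (if j = j0 then g j0 * h j0 else 0)"
      using block_structure_block_unique[OF bs _ j0 _ _ i, of j] i by (cases "j = j0") auto
  qed
  thus ?thesis using j0 by simp
qed

lemma Db_carrier: "X \<in> Db n m nb \<Longrightarrow> X \<in> carrier_mat n m"
  unfolding Db_def by auto

lemma zero_mat_in_Db: "0\<^sub>m n m \<in> Db n m nb"
  unfolding Db_def by auto

lemma spectral_norm_zero_mat: "spectral_norm (0\<^sub>m n m) = 0"
proof -
  have "spectral_norm (0\<^sub>m n m) \<le> 0"
  proof (rule spectral_norm_le[of _ n m])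
    fix x :: "real vec" assume "x \<in> carrier_vec m"
    hence "0\<^sub>m n m *\<^sub>v x = 0\<^sub>v n" by (intro eq_vecI) (auto simp: scalar_prod_def)
    thus "(0\<^sub>m n m *\<^sub>v x) \<bullet> (0\<^sub>m n m *\<^sub>v x) \<le> 0\<^sup>2 * (x \<bullet> x)" by simp
  qed auto
  thus ?thesis using spectral_norm_nonneg[of "0\<^sub>m n m"] by simp
qed

lemma mult_Db_index:
  assumes bs: "block_structure n m nb" and X: "X \<in> Db n m nb" and j: "j < m"
    and M: "(M :: real mat) \<in> carrier_mat r n" and i: "i < r"
  shows "(M * X) $$ (i, j) = (\<Sum>c = 0..<nb (Suc j) - nb j. M $$ (i, nb j + c) * X $$ (nb j + c, j))"
proof -
  have Xz: "X $$ (k, j) = 0" if "k < n" "\<not> (nb j \<le> k \<and> k < nb (Suc j))" for k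
    using X that j unfolding Db_def by auto
  have "(M * X) $$ (i, j) = (\<Sum>k = 0..<n. M $$ (i, k) * X $$ (k, j))"
    using M Db_carrier[OF X] i j by (simp add: scalar_prod_def)
  also have "\<dots> = (\<Sum>k = nb j..<nb (Suc j). M $$ (i, k) * X $$ (k, j))"
    using block_structure_le[OF bs, of "Suc j"] j Xz by (intro sum.mono_neutral_right) auto
  also have "\<dots> = (\<Sum>c = 0..<nb (Suc j) - nb j. M $$ (i, nb j + c) * X $$ (nb j + c, j))"
    by (subst sum.atLeastLessThan_shift_0) (simp add: o_def)
  finally show ?thesis .
qed

lemma Db_factorization:
  assumes bs: "block_structure n m nb" and v: "(v :: real vec) \<in> carrier_vec n"
  shows "\<exists>X c. X \<in> Db n m nb \<and> spectral_norm X \<le> 1 \<and> c \<in> carrier_vec m \<and> c \<bullet> c = v \<bullet> v \<and> X *\<^sub>v c = v"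
proof -
  define w where "w j = sqrt (\<Sum>i\<in>{nb j..<nb (Suc j)}. (v $ i)\<^sup>2)" for j
  define X where "X = mat n m (\<lambda>(i,j). if nb j \<le> i \<and> i < nb (Suc j) then v $ i / w j else 0)"
  define c where "c = vec m w"
  have X: "X \<in> carrier_mat n m" unfolding X_def by auto
  have c: "c \<in> carrier_vec m" unfolding c_def by auto
  have w2: "(w j)\<^sup>2 = (\<Sum>i\<in>{nb j..<nb (Suc j)}. (v $ i)\<^sup>2)" for j
    unfolding w_def by (intro real_sqrt_pow2 sum_nonneg) auto
  have XDb: "X \<in> Db n m nb" unfolding Db_def using X by (auto simp: X_def)
  have Xy: "(X *\<^sub>v y) $ i = v $ i / w j * y $ j"
    if y: "y \<in> carrier_vec m" and i: "i < n" and j: "j < m" "nb j \<le> i" "i < nb (Suc j)" for y i j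
  proof -
    have "(X *\<^sub>v y) $ i = (\<Sum>j'<m. (if nb j' \<le> i \<and> i < nb (Suc j') then v $ i / w j' else 0) * y $ j')"
      using i y unfolding X_def by (auto simp: scalar_prod_def lessThan_atLeast0 intro!: sum.cong)
    thus ?thesis using block_structure_sum_pick[OF bs j] by simp
  qed
  have "c \<bullet> c = (\<Sum>j<m. \<Sum>i\<in>{nb j..<nb (Suc j)}. (v $ i)\<^sup>2)"
    unfolding sq_norm_vec_eq_sum[OF c] w2[symmetric] by (simp add: c_def)
  also have "\<dots> = v \<bullet> v" unfolding block_structure_sum_blocks[OF bs] sq_norm_vec_eq_sum[OF v] ..
  finally have cc: "c \<bullet> c = v \<bullet> v" .
  have Xc: "X *\<^sub>v c = v"
  proof (rule eq_vecI)
    fix i assume "i < dim_vec v"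
    hence i: "i < n" using v by simp
    then obtain j where j: "j < m" "nb j \<le> i" "i < nb (Suc j)"
      using block_structure_block_exists[OF bs] by blast
    have "(v $ i)\<^sup>2 \<le> (w j)\<^sup>2" unfolding w2 using j by (intro member_le_sum) auto
    hence "w j = 0 \<Longrightarrow> v $ i = 0" by simp
    thus "(X *\<^sub>v c) $ i = v $ i" unfolding Xy[OF c i j] using j by (auto simp: c_def)
  qed (use X v in auto)
  have "spectral_norm X \<le> 1"
  proof (rule spectral_norm_le[OF X])
    fix y :: "real vec" assume y: "y \<in> carrier_vec m"
    have "(X *\<^sub>v y) \<bullet> (X *\<^sub>v y) = (\<Sum>j<m. \<Sum>i\<in>{nb j..<nb (Suc j)}. ((X *\<^sub>v y) $ i)\<^sup>2)"
      using X y by (simp add: sq_norm_vec_eq_sum[of _ n] block_structure_sum_blocks[OF bs])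
    also have "\<dots> = (\<Sum>j<m. (y $ j / w j)\<^sup>2 * (w j)\<^sup>2)"
    proof (intro sum.cong refl)
      fix j assume j: "j \<in> {..<m}"
      have "\<And>i. i \<in> {nb j..<nb (Suc j)} \<Longrightarrow> i < n"
        using block_structure_le[OF bs, of "Suc j"] j by auto
      thus "(\<Sum>i\<in>{nb j..<nb (Suc j)}. ((X *\<^sub>v y) $ i)\<^sup>2) = (y $ j / w j)\<^sup>2 * (w j)\<^sup>2"
        unfolding w2 sum_distrib_left using Xy[OF y] j
        by (intro sum.cong refl) (auto simp: power_mult_distrib power_divide)
    qed
    also have "\<dots> \<le> (\<Sum>j<m. (y $ j)\<^sup>2)"
    proof (rule sum_mono)
      fix j show "(y $ j / w j)\<^sup>2 * (w j)\<^sup>2 \<le> (y $ j)\<^sup>2" by (cases "w j = 0") (auto simp: power_divide)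
    qed
    also have "\<dots> = 1\<^sup>2 * (y \<bullet> y)" unfolding sq_norm_vec_eq_sum[OF y] by simp
    finally show "(X *\<^sub>v y) \<bullet> (X *\<^sub>v y) \<le> 1\<^sup>2 * (y \<bullet> y)" .
  qed simp
  thus ?thesis using XDb c cc Xc by blast
qed

lemma Db_attains_spectral_norm:
  assumes bs: "block_structure n m nb" and m: "0 < m" and A: "A \<in> carrier_mat n n"
  shows "\<exists>X. X \<in> Db n m nb \<and> spectral_norm X \<le> 1 \<and> spectral_norm A \<le> spectral_norm (A * X)"
proof -
  obtain v where v: "v \<in> carrier_vec n" and vv: "v \<bullet> v = 1"
    and Av: "(A *\<^sub>v v) \<bullet> (A *\<^sub>v v) = (spectral_norm A)\<^sup>2"
    using spectral_norm_attained[OF A block_structure_pos[OF bs m]] by auto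
  obtain X c where X: "X \<in> Db n m nb" and sX: "spectral_norm X \<le> 1"
    and c: "c \<in> carrier_vec m" and cc: "c \<bullet> c = v \<bullet> v" and Xc: "X *\<^sub>v c = v"
    using Db_factorization[OF bs v] by auto
  have AX: "A * X \<in> carrier_mat n m" using A Db_carrier[OF X] by auto
  have "A * X *\<^sub>v c = A *\<^sub>v v" using A Db_carrier[OF X] c Xc by (simp add: assoc_mult_mat_vec[of _ n n _ m])
  hence "(spectral_norm A)\<^sup>2 \<le> (spectral_norm (A * X))\<^sup>2"
    using spectral_norm_bound[OF AX c] Av cc vv by simp
  hence "spectral_norm A \<le> spectral_norm (A * X)" using spectral_norm_nonneg by (rule power2_le_imp_le)
  thus ?thesis using X sX by blast
qed

section \<open>Block norms\<close>

lemma schatten_norm_mult_Db_le: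
  assumes A: "A \<in> carrier_mat n n" and X: "X \<in> Db n m nb" and sX: "spectral_norm X \<le> 1" and p: "1 \<le> p"
  shows "schatten_norm p (A * X) \<le> real m powr (1 / real p) * spectral_norm A"
proof -
  have AX: "A * X \<in> carrier_mat n m" using A Db_carrier[OF X] by auto
  have "spectral_norm (A * X) \<le> spectral_norm A * spectral_norm X"
    by (rule spectral_norm_mult[OF A Db_carrier[OF X]])
  also have "\<dots> \<le> spectral_norm A" using sX spectral_norm_nonneg[of A] by (simp add: mult_left_le)
  finally have "spectral_norm (A * X) \<le> spectral_norm A" .
  thus ?thesis using schatten_norm_le_spectral_norm[OF AX p] by (meson mult_left_mono order_trans powr_ge_zero)
qed

lemma block_norm_upper:
  assumes A: "A \<in> carrier_mat n n" and p: "1 \<le> p" and X: "X \<in> Db n m nb" and sX: "spectral_norm X \<le> 1"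
  shows "schatten_norm p (A * X) \<le> block_norm n m nb p A"
proof -
  have "bdd_above {schatten_norm p (A * X) | X. X \<in> Db n m nb \<and> spectral_norm X \<le> 1}"
    using schatten_norm_mult_Db_le[OF A _ _ p] unfolding bdd_above_def by blast
  thus ?thesis unfolding block_norm_def using X sX by (intro cSup_upper) blast+
qed

lemma block_norm_least:
  assumes "\<And>X. X \<in> Db n m nb \<Longrightarrow> spectral_norm X \<le> 1 \<Longrightarrow> schatten_norm p (A * X) \<le> z"
  shows "block_norm n m nb p A \<le> z"
  unfolding block_norm_def using assms zero_mat_in_Db spectral_norm_zero_mat
  by (intro cSup_least) force+

lemma block_norm_mult_left:
  assumes A: "A \<in> carrier_mat n n" and B: "B \<in> carrier_mat n n" and p: "1 \<le> p"
  shows "block_norm n m nb p (A * B) \<le> spectral_norm A * block_norm n m nb p B"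
proof (rule block_norm_least)
  fix X assume X: "X \<in> Db n m nb" and sX: "spectral_norm X \<le> 1"
  have BX: "B * X \<in> carrier_mat n m" using B Db_carrier[OF X] by auto
  have "schatten_norm p (A * (B * X)) \<le> spectral_norm A * schatten_norm p (B * X)"
  proof (rule schatten_norm_le_of_dominated[of _ n m _ n])
    fix x :: "real vec" assume x: "x \<in> carrier_vec m"
    have "A * (B * X) *\<^sub>v x = A *\<^sub>v (B * X *\<^sub>v x)" using A BX x by (simp add: assoc_mult_mat_vec[of _ n n _ m])
    thus "(A * (B * X) *\<^sub>v x) \<bullet> (A * (B * X) *\<^sub>v x) \<le> (spectral_norm A)\<^sup>2 * ((B * X *\<^sub>v x) \<bullet> (B * X *\<^sub>v x))"
      using spectral_norm_bound[OF A] BX x by simp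
  qed (use A BX spectral_norm_nonneg p in auto)
  also have "\<dots> \<le> spectral_norm A * block_norm n m nb p B"
    by (rule mult_left_mono[OF block_norm_upper[OF B p X sX] spectral_norm_nonneg])
  finally show "schatten_norm p (A * B * X) \<le> spectral_norm A * block_norm n m nb p B"
    using A B Db_carrier[OF X] by (simp add: assoc_mult_mat[of _ n n _ n _ m])
qed

lemma spectral_norm_le_block_norm:
  assumes bs: "block_structure n m nb" and m: "0 < m" and A: "A \<in> carrier_mat n n" and p: "1 \<le> p"
  shows "spectral_norm A \<le> block_norm n m nb p A"
proof -
  obtain X where X: "X \<in> Db n m nb" and sX: "spectral_norm X \<le> 1"
    and le: "spectral_norm A \<le> spectral_norm (A * X)"
    using Db_attains_spectral_norm[OF bs m A] by auto
  note le
  also have "spectral_norm (A * X) \<le> schatten_norm p (A * X)"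
    using A Db_carrier[OF X] by (intro spectral_norm_le_schatten_norm[OF _ p]) auto
  also have "\<dots> \<le> block_norm n m nb p A" by (rule block_norm_upper[OF A p X sX])
  finally show ?thesis .
qed

lemma block_norm_inf_eq_spectral_norm:
  assumes bs: "block_structure n m nb" and m: "0 < m" and A: "A \<in> carrier_mat n n"
  shows "block_norm_inf n m nb A = spectral_norm A"
proof -
  let ?S = "{spectral_norm (A * X) | X. X \<in> Db n m nb \<and> spectral_norm X \<le> 1}"
  have ub: "spectral_norm (A * X) \<le> spectral_norm A" if "X \<in> Db n m nb" "spectral_norm X \<le> 1" for X
    using spectral_norm_mult[OF A Db_carrier[OF that(1)]] that(2) spectral_norm_nonneg[of A]
    by (meson mult_left_le order_trans)
  obtain X where X: "X \<in> Db n m nb" "spectral_norm X \<le> 1"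
    and le: "spectral_norm A \<le> spectral_norm (A * X)"
    using Db_attains_spectral_norm[OF bs m A] by auto
  have "Sup ?S \<le> spectral_norm A" using X ub by (intro cSup_least) blast+
  moreover have "bdd_above ?S" using ub unfolding bdd_above_def by blast
  hence "spectral_norm (A * X) \<le> Sup ?S" using X by (intro cSup_upper) blast+
  ultimately show ?thesis unfolding block_norm_inf_def using le ub[OF X] by linarith
qed

lemma block_norm_le_spectral_norm:
  assumes A: "A \<in> carrier_mat n n" and p: "1 \<le> p"
  shows "block_norm n m nb p A \<le> real m powr (1 / real p) * spectral_norm A"
  using schatten_norm_mult_Db_le[OF A _ _ p] by (rule block_norm_least)

definition Db_col_block :: "(nat \<Rightarrow> nat) \<Rightarrow> nat \<Rightarrow> real mat \<Rightarrow> real vec" where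
  "Db_col_block nb j X = vec (nb (Suc j) - nb j) (\<lambda>c. X $$ (nb j + c, j))"

lemma block_col_upper_mult_Db_col_block:
  assumes bs: "block_structure n m nb" and X: "X \<in> Db n m nb" and j: "j < m"
    and M: "M \<in> carrier_mat n n" and i: "i < nb (Suc j)"
  shows "(block_col_upper nb j M *\<^sub>v Db_col_block nb j X) $ i = (M * X) $$ (i, j)"
proof -
  have "i < n" using block_structure_le[OF bs, of "Suc j"] i j by simp
  thus ?thesis using mult_Db_index[OF bs X j M] i
    by (auto simp: block_col_upper_def Db_col_block_def scalar_prod_def intro!: sum.cong)
qed

lemma block_upper_triangular_mult_Db_index:
  assumes bs: "block_structure n m nb" and C: "C \<in> carrier_mat n n"
    and ut: "block_upper_triangular n m nb C" and X: "X \<in> Db n m nb" and j: "j < m"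
    and i: "nb (Suc j) \<le> i" "i < n"
  shows "(C * X) $$ (i, j) = 0"
proof -
  obtain r where r: "r < m" "nb r \<le> i" "i < nb (Suc r)"
    using block_structure_block_exists[OF bs i(2)] by auto
  have "\<not> r \<le> j" using block_structure_mono[OF bs, of "Suc r" "Suc j"] r i j by auto
  hence "\<forall>i' c. nb r \<le> i' \<and> i' < nb (Suc r) \<and> nb j \<le> c \<and> c < nb (Suc j) \<longrightarrow> C $$ (i', c) = 0"
    using ut r(1) j unfolding block_upper_triangular_def by (meson not_le)
  hence "C $$ (i, nb j + c) = 0" if "c < nb (Suc j) - nb j" for c using r that by auto
  thus ?thesis using mult_Db_index[OF bs X j C] i by simp
qed

lemma col_sq_norm_block_upper_triangular:
  assumes bs: "block_structure n m nb" and j: "j < m"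
    and A: "A \<in> carrier_mat n n" and C: "C \<in> carrier_mat n n"
    and ut: "block_upper_triangular n m nb C"
    and B: "B \<in> carrier_mat (nb (Suc j)) (nb (Suc j))"
    and CB: "block_col_upper nb j C = B * block_col_upper nb j A"
    and X: "X \<in> Db n m nb"
  shows "col (C * X) j \<bullet> col (C * X) j \<le> (spectral_norm B)\<^sup>2 * (col (A * X) j \<bullet> col (A * X) j)"
proof -
  let ?b = "nb (Suc j)" and ?t = "Db_col_block nb j X"
  have b: "?b \<le> n" using block_structure_le[OF bs, of "Suc j"] j by simp
  have UA: "block_col_upper nb j A \<in> carrier_mat ?b (?b - nb j)" by (simp add: block_col_upper_def)
  have t: "?t \<in> carrier_vec (?b - nb j)" by (simp add: Db_col_block_def)
  define w where "w = block_col_upper nb j A *\<^sub>v ?t"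
  have w: "w \<in> carrier_vec ?b" unfolding w_def using UA t by auto
  have Bw: "B *\<^sub>v w = block_col_upper nb j C *\<^sub>v ?t"
    unfolding CB w_def using B UA t by (simp add: assoc_mult_mat_vec[of _ ?b ?b _ "?b - nb j"])
  have "col (C * X) j \<bullet> col (C * X) j = (\<Sum>i<n. ((C * X) $$ (i, j))\<^sup>2)"
    using C Db_carrier[OF X] j by (simp add: sq_norm_vec_eq_sum[of _ n])
  also have "\<dots> = (\<Sum>i<?b. ((C * X) $$ (i, j))\<^sup>2)"
    using b block_upper_triangular_mult_Db_index[OF bs C ut X j] by (intro sum.mono_neutral_right) auto
  also have "\<dots> = (B *\<^sub>v w) \<bullet> (B *\<^sub>v w)"
    unfolding Bw using block_col_upper_mult_Db_col_block[OF bs X j C] B w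
    by (simp add: sq_norm_vec_eq_sum[of _ ?b] Bw[symmetric])
  also have "\<dots> \<le> (spectral_norm B)\<^sup>2 * (w \<bullet> w)" by (rule spectral_norm_bound[OF B w])
  also have "w \<bullet> w = (\<Sum>i<?b. ((A * X) $$ (i, j))\<^sup>2)"
    unfolding sq_norm_vec_eq_sum[OF w] by (simp add: w_def block_col_upper_mult_Db_col_block[OF bs X j A])
  also have "\<dots> \<le> (\<Sum>i<n. ((A * X) $$ (i, j))\<^sup>2)" using b by (intro sum_mono2) auto
  also have "\<dots> = col (A * X) j \<bullet> col (A * X) j"
    using A Db_carrier[OF X] j by (simp add: sq_norm_vec_eq_sum[of _ n])
  finally show ?thesis by (simp add: mult_left_mono)
qed

lemma block_norm_2_block_upper_triangular:
  assumes bs: "block_structure n m nb" and m: "0 < m"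
    and A: "A \<in> carrier_mat n n" and C: "C \<in> carrier_mat n n"
    and ut: "block_upper_triangular n m nb C"
    and Bs: "\<forall>j<m. Bs j \<in> carrier_mat (nb (Suc j)) (nb (Suc j)) \<and>
               block_col_upper nb j C = Bs j * block_col_upper nb j A"
  shows "block_norm n m nb 2 C \<le> (MAX j\<in>{..<m}. spectral_norm (Bs j)) * block_norm n m nb 2 A"
proof (rule block_norm_least)
  define \<beta> where "\<beta> = (MAX j\<in>{..<m}. spectral_norm (Bs j))"
  have \<beta>: "spectral_norm (Bs j) \<le> \<beta>" if "j < m" for j unfolding \<beta>_def using that by (intro Max_ge) auto
  have \<beta>0: "0 \<le> \<beta>" using \<beta>[OF m] spectral_norm_nonneg[of "Bs 0"] by linarith
  fix X assume X: "X \<in> Db n m nb" and sX: "spectral_norm X \<le> 1"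
  have CX: "C * X \<in> carrier_mat n m" and AX: "A * X \<in> carrier_mat n m"
    using A C Db_carrier[OF X] by auto
  have "col (C * X) j \<bullet> col (C * X) j \<le> \<beta>\<^sup>2 * (col (A * X) j \<bullet> col (A * X) j)" if j: "j < m" for j
    using col_sq_norm_block_upper_triangular[OF bs j A C ut _ _ X] Bs j
      mult_right_mono[OF power_mono[OF \<beta>[OF j] spectral_norm_nonneg] real_sq_norm_vec_nonneg]
    by (meson order_trans)
  hence "schatten_norm 2 (C * X) \<le> sqrt (\<Sum>j<m. \<beta>\<^sup>2 * (col (A * X) j \<bullet> col (A * X) j))"
    unfolding schatten_norm_2_eq_sum_col[OF CX] by (intro real_sqrt_le_mono sum_mono) simp
  also have "\<dots> = \<beta> * schatten_norm 2 (A * X)"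
    using \<beta>0 by (simp add: schatten_norm_2_eq_sum_col[OF AX] sum_distrib_left[symmetric] real_sqrt_mult)
  also have "\<dots> \<le> \<beta> * block_norm n m nb 2 A"
    using block_norm_upper[OF A _ X sX] \<beta>0 by (simp add: mult_left_mono)
  finally show "schatten_norm 2 (C * X) \<le> (MAX j\<in>{..<m}. spectral_norm (Bs j)) * block_norm n m nb 2 A"
    unfolding \<beta>_def .
qed

theorem mainTheorem9:
  fixes n m :: nat and nb :: "nat \<Rightarrow> nat" and p :: nat and A B :: "real mat"
  assumes "block_structure n m nb" and "0 < m"
    and "1 \<le> p"
    and "A \<in> carrier_mat n n" and "B \<in> carrier_mat n n"
  shows "block_norm n m nb p (A * B) \<le> spectral_norm A * block_norm n m nb p B
    \<and> (spectral_norm A \<le> block_norm n m nb p A \<and> block_norm_inf n m nb A = spectral_norm A)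
    \<and> block_norm n m nb p A \<le> real m powr (1 / real p) * spectral_norm A
    \<and> (\<forall>C Bs. C \<in> carrier_mat n n \<and> block_upper_triangular n m nb C \<and>
            (\<forall>j<m. Bs j \<in> carrier_mat (nb (Suc j)) (nb (Suc j)) \<and>
                   block_col_upper nb j C = Bs j * block_col_upper nb j A)
          \<longrightarrow> block_norm n m nb 2 C \<le>
                (MAX j\<in>{..<m}. spectral_norm (Bs j)) * block_norm n m nb 2 A)"
  using block_norm_mult_left[OF assms(4,5,3)]
    spectral_norm_le_block_norm[OF assms(1,2,4,3)] block_norm_inf_eq_spectral_norm[OF assms(1,2,4)]
    block_norm_le_spectral_norm[OF assms(4,3)] block_norm_2_block_upper_triangular[OF assms(1,2,4)]
  by blast

end
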